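(* Let $n\ge 2$ and $\ln\hat q=[F_n(z_n)]^{-1}\ln z_n$. Then for every integer $2\le i\le n$, $$\frac{(\ln\hat q)_i}{\ln i}=\begin{cases}1,& i\text{ prime},\\0,& i\text{ not prime},\end{cases}$$ and consequently the number of primes $\le n$ is $\pi(n)=\sum_{i=2}^n \frac{(\ln\hat q)_i}{\ln i}$.
   Context: $z_n=(1,\dots,n)^T$; logarithms of vectors are entry-wise. For $1\le i\le n$, $e_{\bar i|n}\in\mathbb{R}^n$ has $k$-th entry $1$ if $i\mid k$, else $0$. For $2\le i\le n$, $f_{i|n}=\sum_{t=1}^{\lfloor \log_i n\rfloor} e_{\overline{i^t}|n}$, and $f_{1|n}=1_n$. $F_n(z_n)=[f_{1|n}\ \cdots\ f_{n|n}]\in\mathbb{R}^{n\times n}$, which is invertible. *)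

theory Defs
  imports "Jordan_Normal_Form.Gauss_Jordan_Elimination" "HOL-Computational_Algebra.Primes"
begin

(* Vectors/matrices use 0-based indices of Jordan_Normal_Form: the paper's
   k-th entry (1 <= k <= n) is stored at index k-1. *)

(* k-th entry of f_{i|n}: for i = 1 it is 1; for i >= 2 it is the number of
   t with 1 <= t <= floor(log_i n) and i^t dvd k  (t <= floor(log_i n) iff i^t <= n). *)
definition f_entry :: "nat \<Rightarrow> nat \<Rightarrow> nat \<Rightarrow> real" where
  "f_entry n i k = (if i = 1 then 1
     else real (card {t::nat. 1 \<le> t \<and> t \<le> nat \<lfloor>log (real i) (real n)\<rfloor> \<and> i ^ t dvd k}))"

definition F_mat :: "nat \<Rightarrow> real mat" where
  "F_mat n = mat n n (\<lambda>(r, c). f_entry n (c + 1) (r + 1))"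

definition ln_z :: "nat \<Rightarrow> real vec" where
  "ln_z n = vec n (\<lambda>k. ln (real (k + 1)))"

definition ln_qhat :: "nat \<Rightarrow> real vec" where
  "ln_qhat n = the (mat_inverse (F_mat n)) *\<^sub>v ln_z n"

end

theory Submission
  imports Defs "Jordan_Normal_Form.Determinant"
begin

text \<open>For \<open>2 \<le> i\<close> and \<open>1 \<le> k \<le> n\<close> the entry \<open>f_entry n i k\<close> counts the \<open>t \<ge> 1\<close> with
  \<open>i ^ t\<close> dividing \<open>k\<close> (the bound \<open>i ^ t \<le> n\<close> is then automatic), i.e. it is the multiplicity
  of \<open>i\<close> in \<open>k\<close>. Hence \<open>F_n(z_n)\<close> is lower unitriangular, and by unique factorisation,
  \<open>ln k = \<Sum>\<^sub>p v\<^sub>p(k) ln p\<close>, the vector with entry \<open>ln p\<close> at each prime \<open>p\<close> and \<open>0\<close> elsewhere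
  solves \<open>F_n(z_n) x = ln z_n\<close>, so it equals \<open>ln q\<close>.\<close>

lemma power_le_imp_le_nat_floor_log:
  assumes "2 \<le> b" "b ^ t \<le> n"
  shows "t \<le> nat \<lfloor>log (real b) (real n)\<rfloor>"
proof -
  have "real b ^ t \<le> real n"
    using assms(2) by (metis of_nat_le_iff of_nat_power)
  then have "real t \<le> log (real b) (real n)"
    by (rule le_log_of_power) (use assms(1) in simp)
  then show ?thesis
    by (simp add: le_nat_floor)
qed

lemma f_entry_eq_multiplicity:
  assumes "2 \<le> i" "0 < k" "k \<le> n"
  shows "f_entry n i k = real (multiplicity i k)"
proof -
  have dvd_iff: "i ^ t dvd k \<longleftrightarrow> t \<le> multiplicity i k" for t
    using assms by (intro power_dvd_iff_le_multiplicity) auto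
  have "i ^ t \<le> n" if "t \<le> multiplicity i k" for t
    using that assms dvd_imp_le[of "i ^ t" k] by (simp add: dvd_iff)
  then have "{t. 1 \<le> t \<and> t \<le> nat \<lfloor>log (real i) (real n)\<rfloor> \<and> i ^ t dvd k}
               = {1..multiplicity i k}"
    using assms(1) power_le_imp_le_nat_floor_log by (auto simp: dvd_iff)
  then show ?thesis
    using assms(1) by (simp add: f_entry_def)
qed

lemma F_mat_index:
  assumes "r < n" "c < n"
  shows "F_mat n $$ (r, c) = (if c = 0 then 1 else real (multiplicity (c + 1) (r + 1)))"
proof (cases "c = 0")
  case True
  then show ?thesis
    using assms by (simp add: F_mat_def f_entry_def)
next
  case False
  then show ?thesis
    using assms by (simp add: F_mat_def f_entry_eq_multiplicity)
qed

lemma F_mat_carrier: "F_mat n \<in> carrier_mat n n"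
  by (simp add: F_mat_def)

lemma F_mat_upper_zero:
  assumes "r < c" "c < n"
  shows "F_mat n $$ (r, c) = 0"
proof -
  have "\<not> c + 1 dvd r + 1"
    using assms by (auto dest: dvd_imp_le)
  then show ?thesis
    using assms by (simp add: F_mat_index multiplicity_eq_zero_iff)
qed

lemma F_mat_diag:
  assumes "r < n"
  shows "F_mat n $$ (r, r) = 1"
  using assms by (simp add: F_mat_index multiplicity_self)

lemma det_F_mat: "det (F_mat n) = 1"
proof -
  have "det (F_mat n) = prod_list (diag_mat (F_mat n))"
    using det_lower_triangular[OF _ F_mat_carrier] F_mat_upper_zero by blast
  also have "\<dots> = (\<Prod>r = 0..<n. F_mat n $$ (r, r))"
    by (simp add: prod_list_diag_prod F_mat_def)
  also have "\<dots> = 1"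
    by (simp add: F_mat_diag)
  finally show ?thesis .
qed

lemma mat_inverse_mult_vec_eq:
  fixes A :: "'a :: field mat"
  assumes A: "A \<in> carrier_mat n n" and "det A \<noteq> 0"
    and x: "x \<in> carrier_vec n" and "A *\<^sub>v x = b"
  shows "the (mat_inverse A) *\<^sub>v b = x"
proof -
  have "A \<in> Units (ring_mat TYPE('a) n ())"
    using assms by (intro det_non_zero_imp_unit) auto
  then obtain B where B: "mat_inverse A = Some B"
    using mat_inverse(1)[OF A, where b = "()"] by (cases "mat_inverse A") auto
  then have BA: "B * A = 1\<^sub>m n" and B_carrier: "B \<in> carrier_mat n n"
    using mat_inverse(2)[OF A] by auto
  have "the (mat_inverse A) *\<^sub>v b = B *\<^sub>v (A *\<^sub>v x)"
    using B \<open>A *\<^sub>v x = b\<close> by simp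
  also have "\<dots> = (B * A) *\<^sub>v x"
    using assoc_mult_mat_vec[OF B_carrier A x] by simp
  finally show ?thesis
    using BA x by simp
qed

lemma ln_eq_sum_multiplicity:
  assumes "0 < m"
  shows "ln (real m) = (\<Sum>p\<in>prime_factors m. real (multiplicity p m) * ln (real p))"
proof -
  have "real m = (\<Prod>p\<in>prime_factors m. real p ^ multiplicity p m)"
    using prod_prime_factors[of m] assms by (simp flip: of_nat_power of_nat_prod)
  also have "ln \<dots> = (\<Sum>p\<in>prime_factors m. ln (real p ^ multiplicity p m))"
    by (rule ln_prod) (auto simp: prime_gt_0_nat dest: in_prime_factors_imp_prime)
  also have "\<dots> = (\<Sum>p\<in>prime_factors m. real (multiplicity p m) * ln (real p))"
    by (intro sum.cong refl) (simp add: ln_realpow prime_gt_0_nat in_prime_factors_iff)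
  finally show ?thesis .
qed

lemma ln_eq_sum_primes_le:
  assumes "0 < m" "m \<le> n"
  shows "ln (real m) = (\<Sum>p | prime p \<and> p \<le> n. real (multiplicity p m) * ln (real p))"
proof -
  have "prime_factors m \<subseteq> {p. prime p \<and> p \<le> n}"
    using assms by (auto simp: in_prime_factors_iff) (meson dvd_imp_le le_trans)
  moreover have "multiplicity p m = 0" if "p \<notin> prime_factors m" "prime p" for p
    using that assms by (simp add: in_prime_factors_iff not_dvd_imp_multiplicity_0)
  ultimately show ?thesis
    unfolding ln_eq_sum_multiplicity[OF assms(1)]
    by (intro sum.mono_neutral_left) auto
qed

definition prime_ln_vec :: "nat \<Rightarrow> real vec" where
  "prime_ln_vec n = vec n (\<lambda>k. if prime (k + 1) then ln (real (k + 1)) else 0)"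

lemma F_mat_mult_prime_ln_vec: "F_mat n *\<^sub>v prime_ln_vec n = ln_z n"
proof (rule eq_vecI)
  fix k assume "k < dim_vec (ln_z n)"
  then have k: "k < n"
    by (simp add: ln_z_def)
  let ?term = "\<lambda>p. if prime p then real (multiplicity p (k + 1)) * ln (real p) else 0"
  have "(F_mat n *\<^sub>v prime_ln_vec n) $ k = (\<Sum>c<n. F_mat n $$ (k, c) * prime_ln_vec n $ c)"
    using k by (simp add: F_mat_def prime_ln_vec_def scalar_prod_def atLeast0LessThan)
  also have "\<dots> = (\<Sum>c<n. ?term (Suc c))"
    using k by (intro sum.cong) (auto simp: prime_ln_vec_def F_mat_index)
  also have "\<dots> = (\<Sum>p\<in>{1..n}. ?term p)"
    by (simp add: sum.atLeast1_atMost_eq)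
  also have "\<dots> = (\<Sum>p | prime p \<and> p \<le> n. real (multiplicity p (k + 1)) * ln (real p))"
    by (simp add: sum.inter_filter[symmetric]) (auto intro!: sum.cong dest: prime_gt_0_nat)
  also have "\<dots> = ln_z n $ k"
    using k ln_eq_sum_primes_le[of "k + 1" n] by (simp add: ln_z_def)
  finally show "(F_mat n *\<^sub>v prime_ln_vec n) $ k = ln_z n $ k" .
qed (simp add: F_mat_def ln_z_def)

lemma ln_qhat_eq_prime_ln_vec: "ln_qhat n = prime_ln_vec n"
  unfolding ln_qhat_def
  by (rule mat_inverse_mult_vec_eq[OF F_mat_carrier _ _ F_mat_mult_prime_ln_vec])
     (simp_all add: det_F_mat prime_ln_vec_def)

theorem mainTheorem8:
  fixes n :: nat
  assumes "n \<ge> 2"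
  shows "(\<forall>i\<in>{2..n}. ln_qhat n $ (i - 1) / ln (real i) = (if prime i then 1 else 0))
         \<and> real (card {p::nat. prime p \<and> p \<le> n}) = (\<Sum>i=2..n. ln_qhat n $ (i - 1) / ln (real i))"
proof -
  have indicator: "ln_qhat n $ (i - 1) / ln (real i) = (if prime i then 1 else 0)"
    if "i \<in> {2..n}" for i
  proof -
    have "i - 1 < n" "Suc (i - 1) = i"
      using that by auto
    then show ?thesis
      using that by (simp add: ln_qhat_eq_prime_ln_vec prime_ln_vec_def)
  qed
  have "(\<Sum>i=2..n. ln_qhat n $ (i - 1) / ln (real i)) = (\<Sum>i=2..n. if prime i then 1 else 0)"
    by (intro sum.cong refl indicator)
  also have "\<dots> = real (card {p. prime p \<and> p \<le> n})"
    by (simp add: sum.If_cases Int_def conj_commute)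
       (metis (no_types) atLeastAtMost_iff prime_ge_2_nat)
  finally show ?thesis
    using indicator by simp
qed

end
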